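(* Let $X$ be a nontrivial real Banach space. The following assertions are equivalent: (i) $X^*$ has the weak$^*$ local diameter $2$ property; (ii) $X$ is locally octahedral; (iii) for every $x\in S_X$, every $\alpha\in[-1,1]$, every $\varepsilon>0$, and every $\varepsilon_0\in(0,\varepsilon)$, there is a $y\in S_X$ such that, whenever $|\gamma|\leq 1+\varepsilon_0$, there is a $y^*\in X^*$ satisfying $y^*(x)=\alpha$, $y^*(y)=\gamma$, and $\|y^*\|\leq 1+\varepsilon$; (iii') for every $x\in S_X$, every $\alpha\in[-1,1]$, and every $\varepsilon>0$, there are $y\in S_X$ and $x_1^*,x_2^*\in X^*$ satisfying $x_1^*(x)=x_2^*(x)=\alpha$, $x_1^*(y)-x_2^*(y)>2-\varepsilon$, and $\|x_1^*\|,\|x_2^*\|\leq 1+\varepsilon$; (iii'') for every $x\in S_X$ and every $\varepsilon>0$, there are $y\in S_X$ and $x_1^*,x_2^*\in X^*$ satisfying $x_1^*(x)=x_2^*(x)=1$, $x_1^*(y)-x_2^*(y)>2-\varepsilon$, and $\|x_1^*\|,\|x_2^*\|\leq 1+\varepsilon$.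
   Context: $B_Z$, $S_Z$ denote the closed unit ball and unit sphere of a Banach space $Z$. A weak$^*$ slice of $B_{X^*}$ is a set of the form $\{x^*\in B_{X^*}: x^*(x)>1-\alpha\}$ with $x\in S_X$ and $\alpha>0$. $X^*$ has the weak$^*$ local diameter $2$ property if every weak$^*$ slice of $B_{X^*}$ has diameter $2$. $X$ is locally octahedral if for every $x\in X$ and every $\varepsilon>0$ there is a $y\in S_X$ such that $\|sx+y\|\geq(1-\varepsilon)(|s|\|x\|+\|y\|)$ for all $s\in\mathbb{R}$. *)

theory Defs
  imports "HOL-Analysis.Analysis"
begin

(* The dual space X* is modelled by bounded linear functionals of type blinfun to real, with the operator norm. *)

definition wstar_slice :: "'a::real_normed_vector \<Rightarrow> real \<Rightarrow> ('a \<Rightarrow>\<^sub>L real) set" where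
  "wstar_slice x \<alpha> = {f. norm f \<le> 1 \<and> blinfun_apply f x > 1 - \<alpha>}"

definition wstar_LD2P :: "'a::real_normed_vector itself \<Rightarrow> bool" where
  "wstar_LD2P _ \<longleftrightarrow>
     (\<forall>(x::'a) \<alpha>. norm x = 1 \<and> \<alpha> > 0 \<longrightarrow> diameter (wstar_slice x \<alpha>) = 2)"

definition locally_octahedral :: "'a::real_normed_vector itself \<Rightarrow> bool" where
  "locally_octahedral _ \<longleftrightarrow>
     (\<forall>(x::'a) (\<epsilon>::real). \<epsilon> > 0 \<longrightarrow>
        (\<exists>y::'a. norm y = 1 \<and>
           (\<forall>s::real. norm (s *\<^sub>R x + y) \<ge> (1 - \<epsilon>) * (\<bar>s\<bar> * norm x + norm y))))"

end

theory Submission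
  imports Defs
begin

text \<open>
  Local octahedrality gives every unit vector \<open>x\<close>, for each \<open>\<delta> > 0\<close>, a unit partner \<open>y\<close> with
  \<open>(1 - \<delta>) * (\<bar>a\<bar> + \<bar>b\<bar>) \<le> norm (a *\<^sub>R x + b *\<^sub>R y)\<close>: the span of \<open>x\<close> and \<open>y\<close> is almost
  isometric to two-dimensional l1. On that span, arbitrary values \<open>f x = \<alpha>\<close>, \<open>f y = \<gamma>\<close> with
  \<open>\<bar>\<alpha>\<bar>, \<bar>\<gamma>\<bar> \<le> K\<close> define a functional of norm at most \<open>K / (1 - \<delta>)\<close>, which Hahn-Banach extends
  to the whole space. This gives (iii) directly, and with \<open>\<gamma> = \<plusminus>(1 - \<delta>)\<close> two functionals in
  the weak* slice at \<open>x\<close> at distance \<open>2 * (1 - \<delta>)\<close>. Conversely, two functionals of norm close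
  to 1 that are close to 1 at \<open>x\<close> and differ by almost 2 at \<open>y\<close> bound \<open>norm (r *\<^sub>R x + y)\<close> from
  below by almost \<open>\<bar>r\<bar> + 1\<close>: test against the first one if \<open>r \<ge> 0\<close> and against the negative
  of the second one otherwise.
\<close>

section \<open>Hahn-Banach extension\<close>

text \<open>\<open>(x, a) \<in> G\<close> encodes \<open>f x = a\<close> for a linear functional \<open>f\<close> on the subspace \<open>fst ` G\<close>.\<close>

definition dominated_graph :: "real \<Rightarrow> ('a::real_normed_vector \<times> real) set \<Rightarrow> bool" where
  "dominated_graph C G \<longleftrightarrow>
     subspace G \<and> (\<forall>a. (0, a) \<in> G \<longrightarrow> a = 0) \<and> (\<forall>(x, a) \<in> G. a \<le> C * norm x)"

lemma dominated_graph_Union_chain: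
  assumes dom: "\<And>G. G \<in> Ch \<Longrightarrow> dominated_graph C G"
    and chain: "\<And>G H. G \<in> Ch \<Longrightarrow> H \<in> Ch \<Longrightarrow> G \<subseteq> H \<or> H \<subseteq> G"
    and "Ch \<noteq> {}"
  shows "dominated_graph C (\<Union>Ch)"
proof -
  have "subspace (\<Union>Ch)"
    unfolding subspace_def
  proof (intro conjI ballI allI)
    show "0 \<in> \<Union>Ch"
      using \<open>Ch \<noteq> {}\<close> dom by (auto simp: dominated_graph_def subspace_0)
  next
    fix p q assume "p \<in> \<Union>Ch" "q \<in> \<Union>Ch"
    then obtain G where "G \<in> Ch" "p \<in> G" "q \<in> G"
      using chain by blast
    then show "p + q \<in> \<Union>Ch"
      using dom by (blast intro: subspace_add dest: dominated_graph_def[THEN iffD1])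
  next
    fix c p assume "p \<in> \<Union>Ch"
    then obtain G where "G \<in> Ch" "p \<in> G" by blast
    then show "c *\<^sub>R p \<in> \<Union>Ch"
      using dom by (blast intro: subspace_scale dest: dominated_graph_def[THEN iffD1])
  qed
  then show ?thesis
    using dom unfolding dominated_graph_def by blast
qed

lemma subspace_graph_bound_rescale:
  assumes sub: "subspace M" and bound: "\<And>m a. (m, a) \<in> M \<Longrightarrow> a + d \<le> C * norm (m + w)"
    and ma: "(m, a) \<in> M" and s: "s > 0"
  shows "a + s * d \<le> C * norm (m + s *\<^sub>R w)"
proof -
  have "(m /\<^sub>R s, a / s) \<in> M"
    using subspace_scale[OF sub ma, of "inverse s"] by (simp add: divide_inverse_commute)
  then have "s * (a / s + d) \<le> s * (C * norm (m /\<^sub>R s + w))"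
    using bound s by (simp add: mult_left_mono)
  moreover have "m /\<^sub>R s + w = (m + s *\<^sub>R w) /\<^sub>R s"
    using s by (simp add: field_simps)
  then have "s * norm (m /\<^sub>R s + w) = norm (m + s *\<^sub>R w)"
    using s by simp
  ultimately show ?thesis
    using s by (simp add: distrib_left mult.left_commute)
qed

text \<open>The one-dimensional extension step: \<open>c = Sup {a - C * norm (m - v) | (m, a) \<in> M}\<close> is
  below every \<open>C * norm (n + v) - b\<close>, and homogeneity turns these two bounds into all others.\<close>

lemma dominated_graph_value_exists:
  assumes M: "dominated_graph C M" and C: "C \<ge> 0"
  obtains c where "\<And>m a t. (m, a) \<in> M \<Longrightarrow> a + t * c \<le> C * norm (m + t *\<^sub>R v)"
proof -
  have sub: "subspace M" and bound: "\<And>m a. (m, a) \<in> M \<Longrightarrow> a \<le> C * norm m"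
    using M by (auto simp: dominated_graph_def)
  have "(0, 0) \<in> M"
    using subspace_0[OF sub] by (simp add: zero_prod_def)
  have key: "a - C * norm (m - v) \<le> C * norm (n + v) - b" if "(m, a) \<in> M" "(n, b) \<in> M" for m a n b
  proof -
    have "a + b \<le> C * norm (m + n)"
      using bound subspace_add[OF sub that] by simp
    also have "\<dots> \<le> C * norm (m - v) + C * norm (n + v)"
      using norm_triangle_ineq[of "m - v" "n + v"] C by (simp add: mult_left_mono flip: distrib_left)
    finally show ?thesis by linarith
  qed
  define S where "S = {a - C * norm (m - v) | m a. (m, a) \<in> M}"
  define c where "c = Sup S"
  have "S \<noteq> {}" "bdd_above S"
    using \<open>(0, 0) \<in> M\<close> key[OF _ \<open>(0, 0) \<in> M\<close>] by (auto simp: S_def bdd_above_def)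
  then have "a - C * norm (m - v) \<le> c" and "c \<le> C * norm (m + v) - a" if "(m, a) \<in> M" for m a
    using that key unfolding c_def S_def by (auto intro!: cSup_upper cSup_least)
  then have plus: "a + c \<le> C * norm (m + v)" and minus: "a + - c \<le> C * norm (m + - v)"
    if "(m, a) \<in> M" for m a
    using that by fastforce+
  have "a + t * c \<le> C * norm (m + t *\<^sub>R v)" if ma: "(m, a) \<in> M" for m a t
  proof -
    consider "t = 0" | "t > 0" | "t < 0" by linarith
    then show ?thesis
    proof cases
      case 1
      then show ?thesis using bound[OF ma] by simp
    next
      case 2
      then show ?thesis using subspace_graph_bound_rescale[OF sub plus ma] by simp
    next
      case 3
      then show ?thesis using subspace_graph_bound_rescale[OF sub minus ma, of "- t"] by simp
    qed
  qed
  then show thesis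
    using that by blast
qed

lemma dominated_graph_extend:
  assumes M: "dominated_graph C M" and C: "C \<ge> 0" and v: "v \<notin> fst ` M"
  obtains M' where "dominated_graph C M'" "M \<subseteq> M'" "v \<in> fst ` M'"
proof -
  have sub: "subspace M" and graph: "\<And>a. (0, a) \<in> M \<Longrightarrow> a = 0"
    using M by (auto simp: dominated_graph_def)
  obtain c where c: "\<And>m a t. (m, a) \<in> M \<Longrightarrow> a + t * c \<le> C * norm (m + t *\<^sub>R v)"
    using dominated_graph_value_exists[OF M C] by blast
  define M' where "M' = {p + q | p q. p \<in> M \<and> q \<in> span {(v, c)}}"
  have elem: "\<exists>m a t. (m, a) \<in> M \<and> p = (m + t *\<^sub>R v, a + t * c)" if "p \<in> M'" for p
    using that by (force simp: M'_def span_singleton)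
  have "subspace M'"
    unfolding M'_def by (rule subspace_sums[OF sub subspace_span])
  moreover have "b = 0" if b: "(0, b) \<in> M'" for b
  proof -
    obtain m a t where ma: "(m, a) \<in> M" and eq: "m + t *\<^sub>R v = 0" "b = a + t * c"
      using elem[OF b] by auto
    have "t = 0"
    proof (rule ccontr)
      assume "t \<noteq> 0"
      then have "(v, - a / t) = (- 1 / t) *\<^sub>R (m, a)"
        using eq(1) by (simp add: field_simps add_eq_0_iff2)
      then show False
        using subspace_scale[OF sub ma] v by (metis fst_conv image_eqI)
    qed
    then show ?thesis
      using eq graph ma by simp
  qed
  moreover have "\<forall>(x, a) \<in> M'. a \<le> C * norm x"
    using elem c by fastforce
  moreover have "M \<subseteq> M'"
  proof
    fix p assume "p \<in> M"
    then show "p \<in> M'"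
      unfolding M'_def using span_zero[of "{(v, c)}"] by (intro CollectI exI[of _ p] exI[of _ 0]) simp
  qed
  moreover have "(v, c) \<in> M'"
    unfolding M'_def using subspace_0[OF sub] span_base[of "(v, c)"]
    by (intro CollectI exI[of _ 0] exI[of _ "(v, c)"]) simp
  ultimately show thesis
    using that unfolding dominated_graph_def by (metis fst_conv image_eqI)
qed

lemma dominated_graph_total_blinfun:
  assumes M: "dominated_graph C M" and total: "fst ` M = UNIV" and C: "C \<ge> 0"
  obtains f :: "'a::real_normed_vector \<Rightarrow>\<^sub>L real" where "\<And>x a. (x, a) \<in> M \<Longrightarrow> f x = a" "norm f \<le> C"
proof -
  have sub: "subspace M" and graph: "\<And>a. (0, a) \<in> M \<Longrightarrow> a = 0"
    and bound: "\<And>x a. (x, a) \<in> M \<Longrightarrow> a \<le> C * norm x"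
    using M by (auto simp: dominated_graph_def)
  have unique: "a = b" if "(x, a) \<in> M" "(x, b) \<in> M" for x a b
    using graph[of "a - b"] subspace_diff[OF sub that] by simp
  define g where "g x = (THE a. (x, a) \<in> M)" for x
  have "\<exists>!a. (x, a) \<in> M" for x
  proof -
    have "x \<in> fst ` M"
      using total by simp
    then obtain a where "(x, a) \<in> M" by force
    then show ?thesis
      using unique by blast
  qed
  then have gM: "(x, g x) \<in> M" for x
    unfolding g_def using theI' by metis
  have "(- x, - g x) \<in> M" for x
    using subspace_neg[OF sub gM[of x]] by simp
  then have g_bound: "\<bar>g x\<bar> \<le> C * norm x" for x
    using bound[OF gM[of x]] bound[of "- x" "- g x"] by (simp add: abs_le_iff)
  have linear: "bounded_linear g"
  proof (rule bounded_linear_intro)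
    show "g (x + y) = g x + g y" for x y
      using unique[OF gM[of "x + y"]] subspace_add[OF sub gM[of x] gM[of y]] by simp
    show "g (r *\<^sub>R x) = r *\<^sub>R g x" for r x
      using unique[OF gM[of "r *\<^sub>R x"]] subspace_scale[OF sub gM[of x], of r] by simp
    show "norm (g x) \<le> norm x * C" for x
      using g_bound by (simp add: mult.commute)
  qed
  show thesis
  proof (rule that)
    show "blinfun_apply (Blinfun g) x = a" if "(x, a) \<in> M" for x a
      using unique[OF that gM] linear by (simp add: bounded_linear_Blinfun_apply)
    show "norm (Blinfun g) \<le> C"
      using linear C g_bound
      by (intro norm_blinfun_bound) (auto simp: bounded_linear_Blinfun_apply mult.commute)
  qed
qed

theorem dominated_graph_extends_to_blinfun:
  assumes G: "dominated_graph C G" and C: "C \<ge> 0"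
  obtains f :: "'a::real_normed_vector \<Rightarrow>\<^sub>L real" where "\<And>x a. (x, a) \<in> G \<Longrightarrow> f x = a" "norm f \<le> C"
proof -
  define A where "A = {M. dominated_graph C M \<and> G \<subseteq> M}"
  have "\<forall>Ch\<in>chains A. \<exists>U\<in>A. \<forall>M\<in>Ch. M \<subseteq> U"
  proof
    fix Ch assume "Ch \<in> chains A"
    then have "Ch \<subseteq> A" and chain: "\<And>M M'. M \<in> Ch \<Longrightarrow> M' \<in> Ch \<Longrightarrow> M \<subseteq> M' \<or> M' \<subseteq> M"
      by (auto simp: chains_def chain_subset_def)
    show "\<exists>U\<in>A. \<forall>M\<in>Ch. M \<subseteq> U"
    proof (cases "Ch = {}")
      case True
      then show ?thesis
        using G unfolding A_def by blast
    next
      case False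
      have "dominated_graph C (\<Union>Ch)"
        using \<open>Ch \<subseteq> A\<close> by (intro dominated_graph_Union_chain[OF _ chain False]) (auto simp: A_def)
      moreover have "G \<subseteq> \<Union>Ch"
        using \<open>Ch \<subseteq> A\<close> False unfolding A_def by blast
      ultimately show ?thesis
        unfolding A_def by blast
    qed
  qed
  from Zorn_Lemma2[OF this] obtain M where "M \<in> A" and maximal: "\<And>M'. M' \<in> A \<Longrightarrow> M \<subseteq> M' \<Longrightarrow> M' = M"
    by blast
  then have M: "dominated_graph C M" "G \<subseteq> M"
    unfolding A_def by auto
  have "fst ` M = UNIV"
  proof (rule ccontr)
    assume "fst ` M \<noteq> UNIV"
    then obtain v where v: "v \<notin> fst ` M" by blast
    obtain M' where "dominated_graph C M'" "M \<subseteq> M'" "v \<in> fst ` M'"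
      using dominated_graph_extend[OF M(1) C v] by blast
    with maximal[of M'] M(2) v show False
      unfolding A_def by blast
  qed
  then obtain f :: "'a \<Rightarrow>\<^sub>L real" where "\<And>x a. (x, a) \<in> M \<Longrightarrow> f x = a" "norm f \<le> C"
    using dominated_graph_total_blinfun[OF M(1) _ C] by blast
  then show thesis
    using that M(2) by blast
qed

section \<open>Almost isometric copies of two-dimensional l1\<close>

lemma span_pair_obtain:
  fixes p q :: "'a::real_vector"
  assumes "x \<in> span {p, q}"
  obtains s t where "x = s *\<^sub>R p + t *\<^sub>R q"
proof -
  obtain s where "x - s *\<^sub>R p \<in> span {q}"
    using assms span_insert[of p "{q}"] by blast
  then obtain t where "x - s *\<^sub>R p = t *\<^sub>R q"
    by (auto simp: span_singleton)
  then show thesis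
    using that[of s t] by (simp add: algebra_simps)
qed

lemma dominated_graph_span_ell1_pair:
  fixes u y :: "'a::real_normed_vector"
  assumes ell1: "\<And>a b. c * (\<bar>a\<bar> + \<bar>b\<bar>) \<le> norm (a *\<^sub>R u + b *\<^sub>R y)" and c: "c > 0"
    and K: "\<bar>\<alpha>\<bar> \<le> K" "\<bar>\<gamma>\<bar> \<le> K"
  shows "dominated_graph (K / c) (span {(u, \<alpha>), (y, \<gamma>)})"
proof -
  have elem: "\<exists>s t. x = s *\<^sub>R u + t *\<^sub>R y \<and> a = s * \<alpha> + t * \<gamma>"
    if "(x, a) \<in> span {(u, \<alpha>), (y, \<gamma>)}" for x a
    using that by (rule span_pair_obtain) auto
  have "a = 0" if a: "(0, a) \<in> span {(u, \<alpha>), (y, \<gamma>)}" for a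
  proof -
    obtain s t where st: "s *\<^sub>R u + t *\<^sub>R y = 0" "a = s * \<alpha> + t * \<gamma>"
      using elem[OF a] by auto
    have "c * (\<bar>s\<bar> + \<bar>t\<bar>) \<le> 0"
      using ell1[of s t] st(1) by simp
    then have "\<bar>s\<bar> + \<bar>t\<bar> \<le> 0"
      using c by (simp add: mult_le_0_iff)
    then have "s = 0" "t = 0"
      by auto
    then show ?thesis
      using st(2) by simp
  qed
  moreover have "a \<le> K / c * norm x" if xa: "(x, a) \<in> span {(u, \<alpha>), (y, \<gamma>)}" for x a
  proof -
    obtain s t where st: "x = s *\<^sub>R u + t *\<^sub>R y" "a = s * \<alpha> + t * \<gamma>"
      using elem[OF xa] by auto
    have "a \<le> \<bar>s\<bar> * \<bar>\<alpha>\<bar> + \<bar>t\<bar> * \<bar>\<gamma>\<bar>"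
      using st(2) by (metis abs_ge_self abs_mult abs_triangle_ineq order_trans)
    also have "\<dots> \<le> \<bar>s\<bar> * K + \<bar>t\<bar> * K"
      using K by (intro add_mono mult_left_mono) auto
    also have "\<dots> = K / c * (c * (\<bar>s\<bar> + \<bar>t\<bar>))"
      using c by (simp add: field_simps)
    also have "\<dots> \<le> K / c * norm x"
      using ell1[of s t] st(1) K c by (intro mult_left_mono) auto
    finally show ?thesis .
  qed
  ultimately show ?thesis
    unfolding dominated_graph_def by (auto simp: subspace_span)
qed

lemma blinfun_prescribed_on_ell1_pair:
  fixes u y :: "'a::real_normed_vector"
  assumes ell1: "\<And>a b. c * (\<bar>a\<bar> + \<bar>b\<bar>) \<le> norm (a *\<^sub>R u + b *\<^sub>R y)" and c: "c > 0"
    and K: "\<bar>\<alpha>\<bar> \<le> K" "\<bar>\<gamma>\<bar> \<le> K"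
  obtains f :: "'a \<Rightarrow>\<^sub>L real" where "f u = \<alpha>" "f y = \<gamma>" "norm f \<le> K / c"
proof -
  have "K / c \<ge> 0"
    using K c by simp
  then obtain f :: "'a \<Rightarrow>\<^sub>L real"
    where "\<And>x a. (x, a) \<in> span {(u, \<alpha>), (y, \<gamma>)} \<Longrightarrow> f x = a" "norm f \<le> K / c"
    using dominated_graph_extends_to_blinfun[OF dominated_graph_span_ell1_pair[OF ell1 c K]] by metis
  moreover have "(u, \<alpha>) \<in> span {(u, \<alpha>), (y, \<gamma>)}" "(y, \<gamma>) \<in> span {(u, \<alpha>), (y, \<gamma>)}"
    by (simp_all add: span_base)
  ultimately show thesis
    using that by blast
qed

lemma ell1_pair_of_octahedral_inequality:
  fixes u y :: "'a::real_normed_vector"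
  assumes u: "norm u = 1" and y: "norm y = 1" and "0 \<le> \<delta>"
    and oct: "\<And>s. (1 - \<delta>) * (\<bar>s\<bar> * norm u + norm y) \<le> norm (s *\<^sub>R u + y)"
  shows "(1 - \<delta>) * (\<bar>a\<bar> + \<bar>b\<bar>) \<le> norm (a *\<^sub>R u + b *\<^sub>R y)"
proof (cases "b = 0")
  case True
  then show ?thesis
    using u \<open>0 \<le> \<delta>\<close> by (simp add: algebra_simps)
next
  case False
  have "(1 - \<delta>) * (\<bar>a\<bar> + \<bar>b\<bar>) = \<bar>b\<bar> * ((1 - \<delta>) * (\<bar>a / b\<bar> * norm u + norm y))"
    using False u y by (simp add: abs_divide field_simps)
  also have "\<dots> \<le> \<bar>b\<bar> * norm ((a / b) *\<^sub>R u + y)"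
    by (intro mult_left_mono[OF oct]) simp
  also have "\<dots> = norm (a *\<^sub>R u + b *\<^sub>R y)"
    using False by (simp flip: norm_scaleR add: scaleR_add_right)
  finally show ?thesis .
qed

lemma locally_octahedral_ell1_pair:
  fixes u :: "'a::real_normed_vector"
  assumes "locally_octahedral TYPE('a)" and "norm u = 1" and "c < 1"
  obtains y where "norm y = 1" "\<And>a b. c * (\<bar>a\<bar> + \<bar>b\<bar>) \<le> norm (a *\<^sub>R u + b *\<^sub>R y)"
proof -
  have "\<exists>y::'a. norm y = 1 \<and> (\<forall>s. (1 - (1 - c)) * (\<bar>s\<bar> * norm u + norm y) \<le> norm (s *\<^sub>R u + y))"
    using assms(1)[unfolded locally_octahedral_def, rule_format, of "1 - c" u] assms(3) by simp
  then obtain y :: 'a where y: "norm y = 1" "\<And>s. (1 - (1 - c)) * (\<bar>s\<bar> * norm u + norm y) \<le> norm (s *\<^sub>R u + y)"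
    by blast
  show thesis
  proof (rule that)
    show "norm y = 1" by (fact y(1))
    show "c * (\<bar>a\<bar> + \<bar>b\<bar>) \<le> norm (a *\<^sub>R u + b *\<^sub>R y)" for a b
      using ell1_pair_of_octahedral_inequality[OF assms(2) y(1) _ y(2)] assms(3) by simp
  qed
qed

lemma locally_octahedralI:
  assumes nontrivial: "\<exists>z::'a::real_normed_vector. z \<noteq> 0"
    and unit: "\<And>u::'a. \<And>\<epsilon>. norm u = 1 \<Longrightarrow> 0 < \<epsilon> \<Longrightarrow> \<epsilon> < 1 \<Longrightarrow>
        \<exists>y::'a. norm y = 1 \<and> (\<forall>r. (1 - \<epsilon>) * (\<bar>r\<bar> + 1) \<le> norm (r *\<^sub>R u + y))"
  shows "locally_octahedral TYPE('a)"
  unfolding locally_octahedral_def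
proof (intro allI impI)
  fix x :: 'a and \<epsilon> :: real
  assume "\<epsilon> > 0"
  obtain z :: 'a where "z \<noteq> 0"
    using nontrivial by blast
  show "\<exists>y. norm y = 1 \<and> (\<forall>s. (1 - \<epsilon>) * (\<bar>s\<bar> * norm x + norm y) \<le> norm (s *\<^sub>R x + y))"
  proof (cases "\<epsilon> < 1 \<and> x \<noteq> 0")
    case True
    obtain y :: 'a where y: "norm y = 1" "\<And>r. (1 - \<epsilon>) * (\<bar>r\<bar> + 1) \<le> norm (r *\<^sub>R sgn x + y)"
      using unit[of "sgn x" \<epsilon>] True \<open>\<epsilon> > 0\<close> by (auto simp: norm_sgn)
    have "(s * norm x) *\<^sub>R sgn x = s *\<^sub>R x" for s
      using True by (simp add: sgn_div_norm)
    then have "(1 - \<epsilon>) * (\<bar>s\<bar> * norm x + norm y) \<le> norm (s *\<^sub>R x + y)" for s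
      using y(2)[of "s * norm x"] y(1) by (simp add: abs_mult)
    then show ?thesis
      using y(1) by blast
  next
    case False
    then have "(1 - \<epsilon>) * (\<bar>s\<bar> * norm x + norm (sgn z)) \<le> norm (s *\<^sub>R x + sgn z)" for s
      using \<open>z \<noteq> 0\<close> \<open>\<epsilon> > 0\<close> by (auto simp: norm_sgn mult_nonpos_nonneg intro: order_trans[OF _ norm_ge_zero])
    then show ?thesis
      using \<open>z \<noteq> 0\<close> by (intro exI[of _ "sgn z"]) (simp add: norm_sgn)
  qed
qed

lemma blinfun_exceeds_on_unit_sphere:
  fixes f :: "'a::real_normed_vector \<Rightarrow>\<^sub>L real"
  assumes "c < norm f" and "0 \<le> c"
  obtains y where "norm y = 1" "c < f y"
proof -
  have "\<exists>y. norm y = 1 \<and> c < f y"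
  proof (rule ccontr)
    assume "\<nexists>y. norm y = 1 \<and> c < f y"
    then have unit: "\<bar>f y\<bar> \<le> c" if "norm y = 1" for y
      using that blinfun.minus_right[of f y] by (metis abs_le_iff norm_minus_cancel not_le)
    have "\<bar>f x\<bar> \<le> c * norm x" for x
    proof (cases "x = 0")
      case False
      have "\<bar>f x\<bar> = norm x * \<bar>f (sgn x)\<bar>"
        using False by (simp add: sgn_div_norm blinfun.scaleR_right abs_mult)
      also have "\<dots> \<le> norm x * c"
        using unit[of "sgn x"] False by (intro mult_left_mono) (auto simp: norm_sgn)
      finally show ?thesis by (simp add: mult.commute)
    qed simp
    then have "norm f \<le> c"
      using \<open>0 \<le> c\<close> by (intro norm_blinfun_bound) auto
    then show False
      using \<open>c < norm f\<close> by simp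
  qed
  then show thesis
    using that by blast
qed

lemma norm_lower_bound_from_functionals:
  fixes f1 f2 :: "'a::real_normed_vector \<Rightarrow>\<^sub>L real"
  assumes y: "norm y = 1" and norms: "norm f1 \<le> K" "norm f2 \<le> K"
    and at_u: "m \<le> f1 u" "m \<le> f2 u" and spread: "2 - \<eta> \<le> f1 y - f2 y"
  shows "m * \<bar>r\<bar> + 2 - \<eta> - K \<le> K * norm (r *\<^sub>R u + y)"
proof -
  have bound: "\<bar>f z\<bar> \<le> K * norm z" if "norm f \<le> K" for f :: "'a \<Rightarrow>\<^sub>L real" and z
    using norm_blinfun[of f z] that by (simp add: mult_right_mono order_trans)
  have "\<bar>f1 y\<bar> \<le> K" "\<bar>f2 y\<bar> \<le> K"
    using bound[OF norms(1), of y] bound[OF norms(2), of y] y by auto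
  show ?thesis
  proof (cases "r \<ge> 0")
    case True
    have "m * \<bar>r\<bar> \<le> r * f1 u"
      using mult_right_mono[OF at_u(1) True] True by (simp add: mult.commute)
    moreover have "r * f1 u + f1 y \<le> K * norm (r *\<^sub>R u + y)"
      using bound[OF norms(1), of "r *\<^sub>R u + y"]
      by (simp add: blinfun.add_right blinfun.scaleR_right)
    ultimately show ?thesis
      using spread \<open>\<bar>f2 y\<bar> \<le> K\<close> by linarith
  next
    case False
    have "m * \<bar>r\<bar> \<le> - r * f2 u"
      using mult_right_mono[OF at_u(2), of "- r"] False by (simp add: mult.commute)
    moreover have "- (r * f2 u + f2 y) \<le> K * norm (r *\<^sub>R u + y)"
      using bound[OF norms(2), of "r *\<^sub>R u + y"]
      by (simp add: blinfun.add_right blinfun.scaleR_right)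
    ultimately show ?thesis
      using spread \<open>\<bar>f1 y\<bar> \<le> K\<close> by linarith
  qed
qed

section \<open>The equivalent conditions\<close>

text \<open>Condition (iii) of the theorem; \<open>separation_property\<close> is (iii') for \<open>A = {-1..1}\<close>
  and (iii'') for \<open>A = {1}\<close>.\<close>

definition extension_property :: "'a::real_normed_vector itself \<Rightarrow> bool" where
  "extension_property _ \<longleftrightarrow>
     (\<forall>(x::'a) (\<alpha>::real) (\<epsilon>::real) (\<epsilon>0::real).
        norm x = 1 \<and> \<alpha> \<in> {-1..1} \<and> \<epsilon> > 0 \<and> \<epsilon>0 \<in> {0<..<\<epsilon>} \<longrightarrow>
        (\<exists>y::'a. norm y = 1 \<and>
           (\<forall>\<gamma>::real. \<bar>\<gamma>\<bar> \<le> 1 + \<epsilon>0 \<longrightarrow>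
              (\<exists>g::'a \<Rightarrow>\<^sub>L real. blinfun_apply g x = \<alpha> \<and> blinfun_apply g y = \<gamma> \<and> norm g \<le> 1 + \<epsilon>))))"

definition separation_property :: "'a::real_normed_vector itself \<Rightarrow> real set \<Rightarrow> bool" where
  "separation_property _ A \<longleftrightarrow>
     (\<forall>(x::'a) (\<alpha>::real) (\<epsilon>::real).
        norm x = 1 \<and> \<alpha> \<in> A \<and> \<epsilon> > 0 \<longrightarrow>
        (\<exists>(y::'a) (f1::'a \<Rightarrow>\<^sub>L real) (f2::'a \<Rightarrow>\<^sub>L real). norm y = 1 \<and>
           blinfun_apply f1 x = \<alpha> \<and> blinfun_apply f2 x = \<alpha> \<and> blinfun_apply f1 y - blinfun_apply f2 y > 2 - \<epsilon> \<and> norm f1 \<le> 1 + \<epsilon> \<and> norm f2 \<le> 1 + \<epsilon>))"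

lemma separation_property_mono:
  "separation_property T A \<Longrightarrow> B \<subseteq> A \<Longrightarrow> separation_property T B"
  unfolding separation_property_def by blast

lemma locally_octahedral_imp_extension_property:
  assumes LO: "locally_octahedral TYPE('a::real_normed_vector)"
  shows "extension_property TYPE('a)"
  unfolding extension_property_def
proof (intro allI impI)
  fix x :: 'a and \<alpha> \<epsilon> \<epsilon>0 :: real
  assume H: "norm x = 1 \<and> \<alpha> \<in> {-1..1} \<and> \<epsilon> > 0 \<and> \<epsilon>0 \<in> {0<..<\<epsilon>}"
  define c where "c = (1 + \<epsilon>0) / (1 + \<epsilon>)"
  have c: "0 < c" "c < 1" "(1 + \<epsilon>0) / c = 1 + \<epsilon>"
    using H by (auto simp: c_def field_simps)
  obtain y :: 'a where y: "norm y = 1" "\<And>a b. c * (\<bar>a\<bar> + \<bar>b\<bar>) \<le> norm (a *\<^sub>R x + b *\<^sub>R y)"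
    using locally_octahedral_ell1_pair[OF LO _ \<open>c < 1\<close>] H by blast
  have "\<exists>g::'a \<Rightarrow>\<^sub>L real. blinfun_apply g x = \<alpha> \<and> blinfun_apply g y = \<gamma> \<and> norm g \<le> 1 + \<epsilon>" if "\<bar>\<gamma>\<bar> \<le> 1 + \<epsilon>0" for \<gamma>
  proof -
    have "\<bar>\<alpha>\<bar> \<le> 1 + \<epsilon>0"
      using H by auto
    then show ?thesis
      using blinfun_prescribed_on_ell1_pair[OF y(2) \<open>0 < c\<close> _ that] c(3) by metis
  qed
  then show "\<exists>y::'a. norm y = 1 \<and> (\<forall>\<gamma>. \<bar>\<gamma>\<bar> \<le> 1 + \<epsilon>0 \<longrightarrow>
      (\<exists>g::'a \<Rightarrow>\<^sub>L real. blinfun_apply g x = \<alpha> \<and> blinfun_apply g y = \<gamma> \<and> norm g \<le> 1 + \<epsilon>))"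
    using y(1) by blast
qed

lemma extension_property_imp_separation_property:
  assumes "extension_property TYPE('a::real_normed_vector)"
  shows "separation_property TYPE('a) {-1..1}"
  unfolding separation_property_def
proof (intro allI impI)
  fix x :: 'a and \<alpha> \<epsilon> :: real
  assume H: "norm x = 1 \<and> \<alpha> \<in> {-1..1} \<and> \<epsilon> > 0"
  then have "norm x = 1 \<and> \<alpha> \<in> {-1..1} \<and> \<epsilon> > 0 \<and> \<epsilon> / 2 \<in> {0<..<\<epsilon>}"
    by auto
  then obtain y :: 'a where "norm y = 1"
    and ext: "\<And>\<gamma>. \<bar>\<gamma>\<bar> \<le> 1 + \<epsilon> / 2 \<Longrightarrow> \<exists>g::'a \<Rightarrow>\<^sub>L real. blinfun_apply g x = \<alpha> \<and> blinfun_apply g y = \<gamma> \<and> norm g \<le> 1 + \<epsilon>"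
    using assms unfolding extension_property_def by blast
  obtain f1 :: "'a \<Rightarrow>\<^sub>L real" where "blinfun_apply f1 x = \<alpha>" "blinfun_apply f1 y = 1" "norm f1 \<le> 1 + \<epsilon>"
    using ext[of 1] H by auto
  moreover obtain f2 :: "'a \<Rightarrow>\<^sub>L real" where "blinfun_apply f2 x = \<alpha>" "blinfun_apply f2 y = - 1" "norm f2 \<le> 1 + \<epsilon>"
    using ext[of "- 1"] H by auto
  ultimately show "\<exists>y f1 f2. norm y = 1 \<and> blinfun_apply f1 x = \<alpha> \<and> blinfun_apply f2 x = \<alpha> \<and> blinfun_apply f1 y - blinfun_apply f2 y > 2 - \<epsilon>
      \<and> norm f1 \<le> 1 + \<epsilon> \<and> norm f2 \<le> 1 + \<epsilon>"
    using \<open>norm y = 1\<close> H by force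
qed

lemma separation_property_imp_locally_octahedral:
  assumes nontrivial: "\<exists>z::'a::real_normed_vector. z \<noteq> 0"
    and sep: "separation_property TYPE('a) {1}"
  shows "locally_octahedral TYPE('a)"
proof (rule locally_octahedralI[OF nontrivial])
  fix u :: 'a and \<epsilon> :: real
  assume u: "norm u = 1" and \<epsilon>: "0 < \<epsilon>" "\<epsilon> < 1"
  define \<delta> where "\<delta> = \<epsilon> / 4"
  have \<delta>: "0 < \<delta>" "(1 + \<delta>) * (1 - \<epsilon>) \<le> 1 - 2 * \<delta>"
    using \<epsilon> mult_pos_pos[of \<epsilon> \<epsilon>] unfolding \<delta>_def by (simp_all add: algebra_simps)
  obtain y :: 'a and f1 f2 :: "'a \<Rightarrow>\<^sub>L real" where y: "norm y = 1"
    and f: "blinfun_apply f1 u = 1" "blinfun_apply f2 u = 1" "blinfun_apply f1 y - blinfun_apply f2 y > 2 - \<delta>"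
      "norm f1 \<le> 1 + \<delta>" "norm f2 \<le> 1 + \<delta>"
    using sep[unfolded separation_property_def, rule_format, of u 1 \<delta>] u \<delta>(1) by auto
  have "(1 - \<epsilon>) * (\<bar>r\<bar> + 1) \<le> norm (r *\<^sub>R u + y)" for r
  proof -
    have "(1 + \<delta>) * ((1 - \<epsilon>) * (\<bar>r\<bar> + 1)) \<le> (1 - 2 * \<delta>) * (\<bar>r\<bar> + 1)"
      using mult_right_mono[OF \<delta>(2), of "\<bar>r\<bar> + 1"] by (simp add: mult.assoc)
    also have "\<dots> \<le> \<bar>r\<bar> + 1 - 2 * \<delta>"
      using \<delta>(1) by (simp add: algebra_simps)
    also have "\<dots> \<le> (1 + \<delta>) * norm (r *\<^sub>R u + y)"
      using norm_lower_bound_from_functionals[OF y f(4,5), of 1 u "\<delta>" r] f by simp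
    finally show ?thesis
      using \<delta>(1) by (simp add: mult_le_cancel_left_pos)
  qed
  then show "\<exists>y. norm y = 1 \<and> (\<forall>r. (1 - \<epsilon>) * (\<bar>r\<bar> + 1) \<le> norm (r *\<^sub>R u + y))"
    using y by blast
qed

lemma bounded_wstar_slice: "bounded (wstar_slice x \<alpha>)"
  unfolding bounded_iff wstar_slice_def by auto

lemma wstar_LD2P_imp_locally_octahedral:
  assumes nontrivial: "\<exists>z::'a::real_normed_vector. z \<noteq> 0"
    and D: "wstar_LD2P TYPE('a)"
  shows "locally_octahedral TYPE('a)"
proof (rule locally_octahedralI[OF nontrivial])
  fix u :: 'a and \<epsilon> :: real
  assume u: "norm u = 1" and \<epsilon>: "0 < \<epsilon>" "\<epsilon> < 1"
  have "diameter (wstar_slice u \<epsilon>) = 2"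
    using D u \<epsilon> unfolding wstar_LD2P_def by blast
  then obtain f1 f2 where f: "f1 \<in> wstar_slice u \<epsilon>" "f2 \<in> wstar_slice u \<epsilon>" "2 - \<epsilon> < dist f1 f2"
    using diameter_bounded(2)[OF bounded_wstar_slice[of u \<epsilon>], rule_format, of "2 - \<epsilon>"] \<epsilon> by auto
  then obtain y where y: "norm y = 1" "2 - \<epsilon> < blinfun_apply (f1 - f2) y"
    using blinfun_exceeds_on_unit_sphere[of "2 - \<epsilon>" "f1 - f2"] \<epsilon> by (auto simp: dist_norm)
  have "norm f1 \<le> 1" "norm f2 \<le> 1" "1 - \<epsilon> \<le> blinfun_apply f1 u" "1 - \<epsilon> \<le> blinfun_apply f2 u"
    using f by (auto simp: wstar_slice_def)
  moreover have "2 - \<epsilon> \<le> blinfun_apply f1 y - blinfun_apply f2 y"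
    using y(2) by (simp add: blinfun.diff_left)
  ultimately have "(1 - \<epsilon>) * \<bar>r\<bar> + 2 - \<epsilon> - 1 \<le> 1 * norm (r *\<^sub>R u + y)" for r
    by (rule norm_lower_bound_from_functionals[OF y(1)])
  then show "\<exists>y. norm y = 1 \<and> (\<forall>r. (1 - \<epsilon>) * (\<bar>r\<bar> + 1) \<le> norm (r *\<^sub>R u + y))"
    using y(1) by (auto simp: algebra_simps)
qed

lemma locally_octahedral_wstar_slice_diameter_ge:
  fixes u :: "'a::real_normed_vector"
  assumes LO: "locally_octahedral TYPE('a)" and u: "norm u = 1" and \<delta>: "0 < \<delta>" "\<delta> < \<alpha>" "\<delta> < 1"
  shows "2 * (1 - \<delta>) \<le> diameter (wstar_slice u \<alpha>)"
proof -
  have c: "0 < 1 - \<delta>" "\<bar>1 - \<delta>\<bar> \<le> 1 - \<delta>" "\<bar>- (1 - \<delta>)\<bar> \<le> 1 - \<delta>"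
    using \<delta> by auto
  obtain y :: 'a where y: "norm y = 1" "\<And>a b. (1 - \<delta>) * (\<bar>a\<bar> + \<bar>b\<bar>) \<le> norm (a *\<^sub>R u + b *\<^sub>R y)"
    using locally_octahedral_ell1_pair[OF LO u, of "1 - \<delta>"] \<delta> by auto
  obtain fp :: "'a \<Rightarrow>\<^sub>L real"
    where fp: "blinfun_apply fp u = 1 - \<delta>" "blinfun_apply fp y = 1 - \<delta>" "norm fp \<le> (1 - \<delta>) / (1 - \<delta>)"
    using blinfun_prescribed_on_ell1_pair[OF y(2) c(1,2,2)] .
  obtain fm :: "'a \<Rightarrow>\<^sub>L real"
    where fm: "blinfun_apply fm u = 1 - \<delta>" "blinfun_apply fm y = - (1 - \<delta>)" "norm fm \<le> (1 - \<delta>) / (1 - \<delta>)"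
    using blinfun_prescribed_on_ell1_pair[OF y(2) c(1,2,3)] .
  have "fp \<in> wstar_slice u \<alpha>" "fm \<in> wstar_slice u \<alpha>"
    using fp fm \<delta> by (auto simp: wstar_slice_def)
  have "2 * (1 - \<delta>) = \<bar>blinfun_apply (fp - fm) y\<bar>"
    using fp fm c by (simp add: blinfun.diff_left)
  also have "\<dots> \<le> dist fp fm"
    using norm_blinfun[of "fp - fm" y] y(1) by (simp add: dist_norm)
  also have "\<dots> \<le> diameter (wstar_slice u \<alpha>)"
    by (rule diameter_bounded_bound[OF bounded_wstar_slice]) fact+
  finally show ?thesis .
qed

lemma locally_octahedral_imp_wstar_LD2P:
  assumes LO: "locally_octahedral TYPE('a::real_normed_vector)"
  shows "wstar_LD2P TYPE('a)"
  unfolding wstar_LD2P_def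
proof (intro allI impI)
  fix u :: 'a and \<alpha> :: real
  assume "norm u = 1 \<and> \<alpha> > 0"
  then have u: "norm u = 1" and "\<alpha> > 0" by auto
  have "2 \<le> diameter (wstar_slice u \<alpha>)"
  proof (rule field_le_epsilon)
    fix e :: real assume "0 < e"
    define \<delta> where "\<delta> = min (e / 2) (min (\<alpha> / 2) (1 / 2))"
    have "2 * (1 - \<delta>) \<le> diameter (wstar_slice u \<alpha>)" "2 * \<delta> \<le> e"
      using locally_octahedral_wstar_slice_diameter_ge[OF LO u, of \<delta> \<alpha>] \<open>0 < e\<close> \<open>\<alpha> > 0\<close>
      by (auto simp: \<delta>_def)
    then show "2 \<le> diameter (wstar_slice u \<alpha>) + e"
      by (simp add: algebra_simps)
  qed
  moreover have "diameter (wstar_slice u \<alpha>) \<le> 2"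
  proof (rule diameter_le)
    fix f g assume "f \<in> wstar_slice u \<alpha>" "g \<in> wstar_slice u \<alpha>"
    then show "norm (f - g) \<le> 2"
      using norm_triangle_ineq4[of f g] by (auto simp: wstar_slice_def)
  qed simp
  ultimately show "diameter (wstar_slice u \<alpha>) = 2" by simp
qed

theorem theorem3p1:
  assumes nontriv: "\<exists>z::'a::banach. z \<noteq> 0"
  shows "(wstar_LD2P TYPE('a) \<longleftrightarrow> locally_octahedral TYPE('a))
    \<and> (locally_octahedral TYPE('a) \<longleftrightarrow>
        (\<forall>(x::'a) (\<alpha>::real) (\<epsilon>::real) (\<epsilon>0::real).
           norm x = 1 \<and> \<alpha> \<in> {-1..1} \<and> \<epsilon> > 0 \<and> \<epsilon>0 \<in> {0<..<\<epsilon>} \<longrightarrow>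
           (\<exists>y::'a. norm y = 1 \<and>
              (\<forall>\<gamma>::real. \<bar>\<gamma>\<bar> \<le> 1 + \<epsilon>0 \<longrightarrow>
                 (\<exists>g::'a \<Rightarrow>\<^sub>L real. blinfun_apply g x = \<alpha> \<and> blinfun_apply g y = \<gamma> \<and> norm g \<le> 1 + \<epsilon>)))))
    \<and> (locally_octahedral TYPE('a) \<longleftrightarrow>
        (\<forall>(x::'a) (\<alpha>::real) (\<epsilon>::real).
           norm x = 1 \<and> \<alpha> \<in> {-1..1} \<and> \<epsilon> > 0 \<longrightarrow>
           (\<exists>(y::'a) (f1::'a \<Rightarrow>\<^sub>L real) (f2::'a \<Rightarrow>\<^sub>L real). norm y = 1 \<and>
              blinfun_apply f1 x = \<alpha> \<and> blinfun_apply f2 x = \<alpha> \<and> blinfun_apply f1 y - blinfun_apply f2 y > 2 - \<epsilon> \<and>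
              norm f1 \<le> 1 + \<epsilon> \<and> norm f2 \<le> 1 + \<epsilon>)))
    \<and> (locally_octahedral TYPE('a) \<longleftrightarrow>
        (\<forall>(x::'a) (\<epsilon>::real).
           norm x = 1 \<and> \<epsilon> > 0 \<longrightarrow>
           (\<exists>(y::'a) (f1::'a \<Rightarrow>\<^sub>L real) (f2::'a \<Rightarrow>\<^sub>L real). norm y = 1 \<and>
              blinfun_apply f1 x = 1 \<and> blinfun_apply f2 x = 1 \<and> blinfun_apply f1 y - blinfun_apply f2 y > 2 - \<epsilon> \<and>
              norm f1 \<le> 1 + \<epsilon> \<and> norm f2 \<le> 1 + \<epsilon>)))"
  (is "(?D \<longleftrightarrow> ?LO) \<and> (?LO \<longleftrightarrow> ?iii) \<and> (?LO \<longleftrightarrow> ?iii') \<and> (?LO \<longleftrightarrow> ?iii'')")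
proof -
  have "?iii \<longleftrightarrow> extension_property TYPE('a)"
    unfolding extension_property_def ..
  moreover have "?iii' \<longleftrightarrow> separation_property TYPE('a) {-1..1}"
    unfolding separation_property_def ..
  moreover have "?iii'' \<longleftrightarrow> separation_property TYPE('a) {1}"
    unfolding separation_property_def by simp
  moreover have "?LO \<Longrightarrow> extension_property TYPE('a)"
    by (rule locally_octahedral_imp_extension_property)
  moreover have "extension_property TYPE('a) \<Longrightarrow> separation_property TYPE('a) {-1..1}"
    by (rule extension_property_imp_separation_property)
  moreover have "separation_property TYPE('a) {-1..1} \<Longrightarrow> separation_property TYPE('a) {1}"
    by (erule separation_property_mono) simp
  moreover have "separation_property TYPE('a) {1} \<Longrightarrow> ?LO"
    by (rule separation_property_imp_locally_octahedral[OF nontriv])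
  moreover have "?D \<longleftrightarrow> ?LO"
    using wstar_LD2P_imp_locally_octahedral[OF nontriv] locally_octahedral_imp_wstar_LD2P by blast
  ultimately show ?thesis
    by blast
qed

end
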